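(* Let $G\in\mathcal{G}_3$ and let $x$ be an interior vertex of $G$, i.e. $S(x)\in\mathcal{S}_2$. For $k\ge0$ let $V_k$ denote the number of complete subgraphs $K_{k+1}$ of $S(x)$. Then the curvature $K(x)=1-\frac{V_0}{2}+\frac{V_1}{3}-\frac{V_2}{4}$ equals $0$.
   Context: All graphs are finite simple graphs $G=(V,E)$. For a vertex $x$, the unit sphere $S(x)$ is the subgraph induced by the neighbors of $x$. A graph is contractible if it is the one-vertex graph $K_1$, or, inductively, if there is a vertex $x$ such that both $S(x)$ and the subgraph induced by $V\setminus\{x\}$ are contractible. Let $\mathcal{G}_0$ be the class of graphs without edges, $\mathcal{S}_0\subset\mathcal{G}_0$ those with exactly two vertices, $\mathcal{B}_0\subset\mathcal{G}_0$ those with exactly one vertex. For $d\ge1$, inductively: $\mathcal{G}_d$ is the class of graphs in which every unit sphere $S(x)$ lies in $\mathcal{S}_{d-1}\cup\mathcal{B}_{d-1}$; the boundary $\delta G$ is the subgraph induced by vertices $x$ with $S(x)\in\mathcal{B}_{d-1}$, and the interior (the other vertices, those with $S(x)\in\mathcal{S}_{d-1}$) is required to be nonempty; $\mathcal{B}_d$ is the class of contractible graphs in $\mathcal{G}_d$ whose boundary lies in $\mathcal{S}_{d-1}$; $\mathcal{S}_d$ is the class of non-contractible graphs in $\mathcal{G}_d$ such that removing any single vertex (with its incident edges) yields a graph in $\mathcal{B}_d$. *)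

theory Defs
  imports Complex_Main
begin

text \<open>A finite simple graph: a finite vertex set together with a symmetric,
irreflexive edge relation on it (edges as ordered pairs in both directions).\<close>

type_synonym 'a graph = "'a set \<times> ('a \<times> 'a) set"

definition verts :: "'a graph \<Rightarrow> 'a set" where "verts G = fst G"
definition edges :: "'a graph \<Rightarrow> ('a \<times> 'a) set" where "edges G = snd G"

definition wf_graph :: "'a graph \<Rightarrow> bool" where
  "wf_graph G \<longleftrightarrow> finite (verts G) \<and> edges G \<subseteq> verts G \<times> verts G
     \<and> sym (edges G) \<and> irrefl (edges G)"

definition induced :: "'a graph \<Rightarrow> 'a set \<Rightarrow> 'a graph" where
  "induced G W = (W \<inter> verts G, edges G \<inter> ((W \<inter> verts G) \<times> (W \<inter> verts G)))"

definition sphere :: "'a graph \<Rightarrow> 'a \<Rightarrow> 'a graph" where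
  "sphere G x = induced G {y. (x, y) \<in> edges G}"

definition delete_vertex :: "'a graph \<Rightarrow> 'a \<Rightarrow> 'a graph" where
  "delete_vertex G x = induced G (verts G - {x})"

inductive contractible :: "'a graph \<Rightarrow> bool" where
  K1: "wf_graph G \<Longrightarrow> verts G = {v} \<Longrightarrow> contractible G"
| step: "wf_graph G \<Longrightarrow> x \<in> verts G \<Longrightarrow> contractible (sphere G x)
          \<Longrightarrow> contractible (delete_vertex G x) \<Longrightarrow> contractible G"

definition gcond :: "('a graph \<Rightarrow> bool) \<Rightarrow> ('a graph \<Rightarrow> bool) \<Rightarrow> 'a graph \<Rightarrow> bool" where
  "gcond Sp Bp G \<longleftrightarrow> wf_graph G
     \<and> (\<forall>x \<in> verts G. Sp (sphere G x) \<or> Bp (sphere G x))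
     \<and> (\<exists>x \<in> verts G. Sp (sphere G x))"

definition boundary :: "('a graph \<Rightarrow> bool) \<Rightarrow> 'a graph \<Rightarrow> 'a graph" where
  "boundary Bp G = induced G {x \<in> verts G. Bp (sphere G x)}"

definition bcond :: "('a graph \<Rightarrow> bool) \<Rightarrow> ('a graph \<Rightarrow> bool) \<Rightarrow> 'a graph \<Rightarrow> bool" where
  "bcond Sp Bp G \<longleftrightarrow> contractible G \<and> gcond Sp Bp G \<and> Sp (boundary Bp G)"

fun Sclass :: "nat \<Rightarrow> 'a graph \<Rightarrow> bool"
and Bclass :: "nat \<Rightarrow> 'a graph \<Rightarrow> bool" where
  "Sclass 0 G \<longleftrightarrow> wf_graph G \<and> edges G = {} \<and> card (verts G) = 2"
| "Bclass 0 G \<longleftrightarrow> wf_graph G \<and> edges G = {} \<and> card (verts G) = 1"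
| "Sclass (Suc d) G \<longleftrightarrow> gcond (Sclass d) (Bclass d) G \<and> \<not> contractible G
     \<and> (\<forall>x \<in> verts G. bcond (Sclass d) (Bclass d) (delete_vertex G x))"
| "Bclass (Suc d) G \<longleftrightarrow> bcond (Sclass d) (Bclass d) G"

fun Gclass :: "nat \<Rightarrow> 'a graph \<Rightarrow> bool" where
  "Gclass 0 G \<longleftrightarrow> wf_graph G \<and> edges G = {}"
| "Gclass (Suc d) G \<longleftrightarrow> gcond (Sclass d) (Bclass d) G"

definition num_cliques :: "'a graph \<Rightarrow> nat \<Rightarrow> nat" where
  "num_cliques H k = card {A. A \<subseteq> verts H \<and> card A = k + 1
      \<and> (\<forall>u \<in> A. \<forall>v \<in> A. u \<noteq> v \<longrightarrow> (u, v) \<in> edges H)}"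

end

theory Submission
  imports Defs
begin

text \<open>The Euler characteristic \<open>\<chi>\<close> of the Whitney complex (the alternating count of nonempty
cliques) satisfies \<open>\<chi>(G) = \<chi>(G - x) + 1 - \<chi>(S(x))\<close>. Hence contractible graphs have
\<open>\<chi> = 1\<close>, and by induction every \<open>d\<close>-sphere has \<open>\<chi> = 1 + (-1)^d\<close>; comparing Euler
characteristics also shows that unit spheres of a \<open>d\<close>-sphere are \<open>(d-1)\<close>-spheres.
In a 2-sphere the link of an edge is therefore a 0-sphere, i.e. two non-adjacent vertices, so
every edge lies in exactly two triangles and there is no \<open>K\<^sub>4\<close>. With \<open>V\<^sub>0 - V\<^sub>1 + V\<^sub>2 = 2\<close> and
\<open>3 V\<^sub>2 = 2 V\<^sub>1\<close> the curvature \<open>1 - V\<^sub>0/2 + V\<^sub>1/3 - V\<^sub>2/4 = 1 - (V\<^sub>0 - V\<^sub>1 + V\<^sub>2)/2\<close> vanishes.\<close>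

definition is_clique :: "'a graph \<Rightarrow> 'a set \<Rightarrow> bool" where
  "is_clique H A \<longleftrightarrow> A \<subseteq> verts H \<and> (\<forall>u\<in>A. \<forall>v\<in>A. u \<noteq> v \<longrightarrow> (u, v) \<in> edges H)"

definition cliques :: "'a graph \<Rightarrow> nat \<Rightarrow> 'a set set" where
  "cliques H k = {A. is_clique H A \<and> card A = k}"

definition euler_char :: "'a graph \<Rightarrow> int" where
  "euler_char H = (\<Sum>A\<in>{A. is_clique H A \<and> A \<noteq> {}}. (-1) ^ (card A + 1))"

lemma verts_induced: "verts (induced G W) = W \<inter> verts G"
  by (simp add: induced_def verts_def)

lemma edges_induced: "edges (induced G W) = edges G \<inter> ((W \<inter> verts G) \<times> (W \<inter> verts G))"
  by (simp add: induced_def edges_def)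

lemma wf_graph_induced: "wf_graph G \<Longrightarrow> wf_graph (induced G W)"
  unfolding wf_graph_def verts_induced edges_induced sym_def irrefl_def by auto

lemma wf_graph_sphere: "wf_graph G \<Longrightarrow> wf_graph (sphere G x)"
  unfolding sphere_def by (rule wf_graph_induced)

lemma verts_sphere: "verts (sphere G x) = {y \<in> verts G. (x, y) \<in> edges G}"
  unfolding sphere_def verts_induced by auto

lemma edges_sphere: "edges (sphere G x) = edges G \<inter> (verts (sphere G x) \<times> verts (sphere G x))"
  unfolding sphere_def verts_induced edges_induced by auto

lemma verts_delete_vertex: "verts (delete_vertex G x) = verts G - {x}"
  unfolding delete_vertex_def verts_induced by auto

lemma edges_delete_vertex:
  "edges (delete_vertex G x) = edges G \<inter> ((verts G - {x}) \<times> (verts G - {x}))"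
  unfolding delete_vertex_def verts_induced edges_induced by auto

lemma wf_graph_edge_sym: "wf_graph G \<Longrightarrow> (u, v) \<in> edges G \<Longrightarrow> (v, u) \<in> edges G"
  by (auto simp: wf_graph_def sym_def)

lemma wf_graph_no_loop: "wf_graph G \<Longrightarrow> (u, u) \<notin> edges G"
  by (auto simp: wf_graph_def irrefl_def)

lemma finite_clique_sets: "wf_graph H \<Longrightarrow> finite {A. is_clique H A \<and> P A}"
  by (rule finite_subset[of _ "Pow (verts H)"]) (auto simp: is_clique_def wf_graph_def)

lemma finite_cliques: "wf_graph H \<Longrightarrow> finite (cliques H k)"
  unfolding cliques_def by (rule finite_clique_sets)

lemma finite_clique: "wf_graph H \<Longrightarrow> is_clique H A \<Longrightarrow> finite A"
  by (auto simp: is_clique_def wf_graph_def intro: finite_subset)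

lemma num_cliques_eq_card_cliques: "num_cliques H k = card (cliques H (k + 1))"
  unfolding num_cliques_def cliques_def is_clique_def by (rule arg_cong[where f = card]) auto

lemma cliques_through_vertex:
  assumes wf: "wf_graph H" and x: "x \<in> verts H"
  shows "{A. is_clique H A \<and> x \<in> A} = insert x ` {B. is_clique (sphere H x) B}"
proof (rule set_eqI, rule iffI)
  fix A assume A: "A \<in> {A. is_clique H A \<and> x \<in> A}"
  then have "is_clique (sphere H x) (A - {x})"
    unfolding is_clique_def verts_sphere edges_sphere by auto
  moreover have "A = insert x (A - {x})" using A by auto
  ultimately show "A \<in> insert x ` {B. is_clique (sphere H x) B}" by blast
next
  fix A assume "A \<in> insert x ` {B. is_clique (sphere H x) B}"
  then obtain B where "is_clique (sphere H x) B" "A = insert x B" by auto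
  then show "A \<in> {A. is_clique H A \<and> x \<in> A}"
    using x wf_graph_edge_sym[OF wf] unfolding is_clique_def verts_sphere edges_sphere by auto
qed

lemma vertex_notin_sphere_clique: "wf_graph H \<Longrightarrow> is_clique (sphere H x) B \<Longrightarrow> x \<notin> B"
  by (auto simp: is_clique_def verts_sphere wf_graph_no_loop)

lemma euler_char_delete_vertex:
  assumes wf: "wf_graph H" and x: "x \<in> verts H"
  shows "euler_char H = euler_char (delete_vertex H x) + 1 - euler_char (sphere H x)"
proof -
  let ?S = "{A. is_clique H A \<and> A \<noteq> {}}"
  let ?B = "{B. is_clique (sphere H x) B}"
  let ?f = "\<lambda>A. (-1::int) ^ (card A + 1)"
  have wfS: "wf_graph (sphere H x)" using wf by (rule wf_graph_sphere)
  have avoiding: "{A \<in> ?S. x \<notin> A} = {A. is_clique (delete_vertex H x) A \<and> A \<noteq> {}}"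
    unfolding is_clique_def verts_delete_vertex edges_delete_vertex by auto
  have through: "{A \<in> ?S. x \<in> A} = insert x ` ?B"
    using cliques_through_vertex[OF wf x] by auto
  have inj: "inj_on (insert x) ?B"
    by (rule inj_onI) (metis vertex_notin_sphere_clique[OF wf] insert_ident mem_Collect_eq)
  have split: "?S = {A \<in> ?S. x \<notin> A} \<union> {A \<in> ?S. x \<in> A}" by auto
  have "euler_char H = sum ?f {A \<in> ?S. x \<notin> A} + sum ?f {A \<in> ?S. x \<in> A}"
    unfolding euler_char_def
    by (subst split, rule sum.union_disjoint) (use finite_clique_sets[OF wf] in auto)
  also have "sum ?f {A \<in> ?S. x \<notin> A} = euler_char (delete_vertex H x)"
    unfolding euler_char_def avoiding ..
  also have "sum ?f {A \<in> ?S. x \<in> A} = (\<Sum>B\<in>?B. (-1) ^ card B)"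
    unfolding through using inj
    by (simp add: sum.reindex vertex_notin_sphere_clique[OF wf] finite_clique[OF wfS])
  also have "?B = insert {} {B. is_clique (sphere H x) B \<and> B \<noteq> {}}"
    by (auto simp: is_clique_def)
  also have "(\<Sum>B\<in>insert {} {B. is_clique (sphere H x) B \<and> B \<noteq> {}}. (-1::int) ^ card B)
      = 1 - euler_char (sphere H x)"
    using finite_clique_sets[OF wfS] by (simp add: euler_char_def sum_negf[symmetric])
  finally show ?thesis by simp
qed

lemma euler_char_edgeless:
  assumes "edges H = {}"
  shows "euler_char H = int (card (verts H))"
proof -
  have "{A. is_clique H A \<and> A \<noteq> {}} = (\<lambda>v. {v}) ` verts H"
  proof (rule set_eqI, rule iffI)
    fix A assume A: "A \<in> {A. is_clique H A \<and> A \<noteq> {}}"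
    then obtain v where "v \<in> A" by auto
    with A assms have "A = {v}" and "v \<in> verts H" by (auto simp: is_clique_def)
    then show "A \<in> (\<lambda>v. {v}) ` verts H" by auto
  qed (auto simp: is_clique_def)
  then show ?thesis unfolding euler_char_def by (simp add: sum.reindex)
qed

lemma euler_char_contractible: "contractible H \<Longrightarrow> euler_char H = 1"
proof (induction rule: contractible.induct)
  case (K1 G v)
  then have "{A. is_clique G A \<and> A \<noteq> {}} = {{v}}" by (auto simp: is_clique_def)
  then show ?case by (simp add: euler_char_def)
next
  case (step G x)
  then show ?case using euler_char_delete_vertex[of G x] by simp
qed

lemma euler_char_Bclass: "Bclass d H \<Longrightarrow> euler_char H = 1"
  by (cases d) (auto simp: euler_char_edgeless bcond_def euler_char_contractible)

lemma wf_graph_Sclass: "Sclass d H \<Longrightarrow> wf_graph H"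
  by (cases d) (auto simp: gcond_def)

lemma euler_char_Sclass: "Sclass d H \<Longrightarrow> euler_char H = 1 + (-1) ^ d"
proof (induction d arbitrary: H)
  case 0
  then show ?case by (simp add: euler_char_edgeless)
next
  case (Suc d)
  then obtain y where y: "y \<in> verts H" "Sclass d (sphere H y)" and wf: "wf_graph H"
    and "bcond (Sclass d) (Bclass d) (delete_vertex H y)"
    by (auto simp: gcond_def)
  then have "euler_char (delete_vertex H y) = 1"
    by (intro euler_char_contractible) (simp add: bcond_def)
  then show ?case using euler_char_delete_vertex[OF wf y(1)] Suc.IH[OF y(2)] by simp
qed

text \<open>A unit sphere in \<open>B\<^sub>d\<close> would force \<open>\<chi> = 1 + 1 - 1 = 1\<close>, which is not \<open>1 + (-1)^(d+1)\<close>.\<close>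

lemma Sclass_sphere:
  assumes S: "Sclass (Suc d) H" and v: "v \<in> verts H"
  shows "Sclass d (sphere H v)"
proof (rule ccontr)
  assume "\<not> Sclass d (sphere H v)"
  then have "Bclass d (sphere H v)" and wf: "wf_graph H"
    and "bcond (Sclass d) (Bclass d) (delete_vertex H v)"
    using S v by (auto simp: gcond_def)
  then have "euler_char (sphere H v) = 1" and "euler_char (delete_vertex H v) = 1"
    by (auto simp: bcond_def euler_char_Bclass euler_char_contractible)
  then show False
    using euler_char_delete_vertex[OF wf v] euler_char_Sclass[OF S] by (cases "even d") auto
qed

lemma euler_char_eq_clique_counts:
  assumes wf: "wf_graph H" and bound: "\<And>A. is_clique H A \<Longrightarrow> card A \<le> n"
  shows "euler_char H = (\<Sum>k<n. (-1) ^ k * int (num_cliques H k))"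
proof -
  let ?S = "{A. is_clique H A \<and> A \<noteq> {}}"
  let ?f = "\<lambda>A. (-1::int) ^ (card A + 1)"
  have pos: "card A \<noteq> 0" if "A \<in> ?S" for A
    using that finite_clique[OF wf] by auto
  have fibre: "{A \<in> ?S. card A - 1 = k} = cliques H (k + 1)" for k
    using pos by (force simp: cliques_def)
  have "euler_char H = (\<Sum>k<n. sum ?f {A \<in> ?S. card A - 1 = k})"
    unfolding euler_char_def
    by (rule sum.group[symmetric]) (use finite_clique_sets[OF wf] bound pos in \<open>force+\<close>)
  also have "\<dots> = (\<Sum>k<n. (-1) ^ k * int (num_cliques H k))"
    unfolding fibre num_cliques_eq_card_cliques by (simp add: cliques_def mult.commute)
  finally show ?thesis .
qed

lemma Sclass2_edge_link:
  assumes S: "Sclass 2 S" and uv: "(u, v) \<in> edges S"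
  defines "L \<equiv> {w \<in> verts S. (u, w) \<in> edges S \<and> (v, w) \<in> edges S}"
  shows "card L = 2" and "\<And>c d. c \<in> L \<Longrightarrow> d \<in> L \<Longrightarrow> (c, d) \<notin> edges S"
proof -
  have wf: "wf_graph S" using S by (rule wf_graph_Sclass)
  have u: "u \<in> verts S" using uv wf by (auto simp: wf_graph_def)
  have v: "v \<in> verts (sphere S u)" using uv wf by (auto simp: verts_sphere wf_graph_def)
  have "Sclass 0 (sphere (sphere S u) v)"
    using Sclass_sphere[OF Sclass_sphere[OF S[unfolded numeral_2_eq_2] u] v] .
  moreover have "verts (sphere (sphere S u) v) = L"
    using v by (auto simp: L_def verts_sphere edges_sphere)
  moreover have "edges (sphere (sphere S u) v) = edges S \<inter> (L \<times> L)"
    using v by (auto simp: L_def verts_sphere edges_sphere)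
  ultimately show "card L = 2" and "\<And>c d. c \<in> L \<Longrightarrow> d \<in> L \<Longrightarrow> (c, d) \<notin> edges S"
    by auto
qed

lemma Sclass2_clique_card_le_3:
  assumes S: "Sclass 2 S" and A: "is_clique S A"
  shows "card A \<le> 3"
proof (rule ccontr)
  assume "\<not> card A \<le> 3"
  then have "4 \<le> card A" by simp
  then obtain B where "B \<subseteq> A" "card B = 4" by (rule obtain_subset_with_card_n)
  moreover from \<open>card B = 4\<close> obtain a b c d where "B = {a, b, c, d}"
    and "a \<noteq> b" "a \<noteq> c" "a \<noteq> d" "b \<noteq> c" "b \<noteq> d" "c \<noteq> d"
    by (auto simp: card_Suc_eq numeral_eq_Suc)
  ultimately show False
    using A Sclass2_edge_link(2)[OF S, of a b c d] by (auto simp: is_clique_def)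
qed

lemma card_edges_in_triangle:
  assumes "t \<in> cliques H 3"
  shows "card {e \<in> cliques H 2. e \<subseteq> t} = 3"
proof -
  have "finite t" using assms by (auto simp: cliques_def intro: card_ge_0_finite)
  moreover have "{e \<in> cliques H 2. e \<subseteq> t} = {e. e \<subseteq> t \<and> card e = 2}"
    using assms by (auto simp: cliques_def is_clique_def)
  ultimately show ?thesis
    using n_subsets[of t 2] assms by (simp add: cliques_def numeral_eq_Suc)
qed

lemma Sclass2_card_triangles_on_edge:
  assumes S: "Sclass 2 S" and e: "e \<in> cliques S 2"
  shows "card {t \<in> cliques S 3. e \<subseteq> t} = 2"
proof -
  have wf: "wf_graph S" using S by (rule wf_graph_Sclass)
  obtain u v where uv: "e = {u, v}" "u \<noteq> v" using e by (auto simp: cliques_def card_2_iff)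
  have E: "(u, v) \<in> edges S" using e uv by (auto simp: cliques_def is_clique_def)
  define L where "L = {w \<in> verts S. (u, w) \<in> edges S \<and> (v, w) \<in> edges S}"
  have L_apart: "w \<noteq> u \<and> w \<noteq> v" if "w \<in> L" for w
    using that wf_graph_no_loop[OF wf] by (auto simp: L_def)
  have "{t \<in> cliques S 3. e \<subseteq> t} = (\<lambda>w. insert w e) ` L"
  proof (rule set_eqI, rule iffI)
    fix t assume t: "t \<in> {t \<in> cliques S 3. e \<subseteq> t}"
    then have "card (t - e) = 1"
      using uv finite_clique[OF wf] by (simp add: cliques_def card_Diff_subset)
    then obtain w where w: "t - e = {w}" by (auto simp: card_Suc_eq)
    then have "t = insert w e" "w \<in> t" "w \<notin> e" using t by auto
    moreover have "w \<in> L"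
      using t \<open>w \<in> t\<close> \<open>w \<notin> e\<close> uv unfolding L_def cliques_def is_clique_def by auto
    ultimately show "t \<in> (\<lambda>w. insert w e) ` L" by auto
  next
    fix t assume "t \<in> (\<lambda>w. insert w e) ` L"
    then obtain w where w: "w \<in> L" "t = insert w e" by auto
    then show "t \<in> {t \<in> cliques S 3. e \<subseteq> t}"
      using E L_apart[OF w(1)] uv wf_graph_edge_sym[OF wf] wf
      by (auto simp: L_def cliques_def is_clique_def wf_graph_def)
  qed
  moreover have "inj_on (\<lambda>w. insert w e) L"
    by (rule inj_onI) (metis L_apart uv(1) insert_iff singletonD)
  ultimately show ?thesis
    using Sclass2_edge_link(1)[OF S E] by (simp add: card_image L_def)
qed

lemma Sclass2_edge_triangle_count:
  assumes S: "Sclass 2 S"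
  shows "3 * num_cliques S 2 = 2 * num_cliques S 1"
proof -
  have wf: "wf_graph S" using S by (rule wf_graph_Sclass)
  have "3 * card (cliques S 3) = (\<Sum>t\<in>cliques S 3. card {e \<in> cliques S 2. e \<subseteq> t})"
    by (simp add: card_edges_in_triangle)
  also have "\<dots> = (\<Sum>e\<in>cliques S 2. card {t \<in> cliques S 3. e \<subseteq> t})"
    using sum.swap_restrict[OF finite_cliques[OF wf] finite_cliques[OF wf],
        where g = "\<lambda>_ _. 1::nat" and R = "\<lambda>t e. e \<subseteq> t"]
    by (simp add: conj_commute)
  also have "\<dots> = 2 * card (cliques S 2)"
    by (simp add: Sclass2_card_triangles_on_edge[OF S])
  finally show ?thesis
    by (simp add: num_cliques_eq_card_cliques numeral_2_eq_2 numeral_3_eq_3)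
qed

theorem mainTheorem4:
  fixes G :: "'a graph" and x :: 'a
  assumes "Gclass 3 G" and "x \<in> verts G" and "Sclass 2 (sphere G x)"
  shows "1 - real (num_cliques (sphere G x) 0) / 2 + real (num_cliques (sphere G x) 1) / 3
           - real (num_cliques (sphere G x) 2) / 4 = 0"
proof -
  \<comment> \<open>Only the hypothesis that \<open>S(x)\<close> is a 2-sphere is needed.\<close>
  define S where "S = sphere G x"
  have S2: "Sclass 2 S" using assms(3) by (simp add: S_def)
  have wf: "wf_graph S" using S2 by (rule wf_graph_Sclass)
  have "euler_char S = 2" using euler_char_Sclass[OF S2] by simp
  then have "int (num_cliques S 0) - int (num_cliques S 1) + int (num_cliques S 2) = 2"
    using euler_char_eq_clique_counts[OF wf Sclass2_clique_card_le_3[OF S2]]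
    by (simp add: numeral_3_eq_3 numeral_2_eq_2)
  then have "real (num_cliques S 0) - real (num_cliques S 1) + real (num_cliques S 2) = 2"
    by (metis of_int_of_nat_eq of_int_diff of_int_add of_int_numeral)
  moreover have "3 * real (num_cliques S 2) = 2 * real (num_cliques S 1)"
    using Sclass2_edge_triangle_count[OF S2] by (metis of_nat_mult of_nat_numeral)
  ultimately show ?thesis unfolding S_def[symmetric] by linarith
qed

end
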